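(* Let $f(X,I)=f_0(I)+f_1(I)X+f_2(I)X^2$ be an $X^2$-model with $f_{20}:=f_2(0)\neq1$, and for $\beta=(\beta_1,\beta_2)$, $\beta_1>\beta_2$, let $\theta_i:=A_i(1)-A_i(0)$, $i=1,2$. Let $Y_-\le Y_+$ denote the zeros (when real) of $z\mapsto h_f(z,1)-h_f(z,0)=(1-f_{20})(z-Y_+)(z-Y_-)$. (i) $\theta_1=\theta_2=0$ if and only if $Y_\pm$ are real and $(\beta_1,\beta_2)=(Y_+,Y_-)$. (ii) If $f$ is admissible, then there exists an $f$-compatible $\beta$ with $\theta_1=\theta_2=0$ if and only if $(Y_+,Y_-)\in\mathcal{B}_f$.
   Context: $f_0,f_1,f_2$ smooth on $[0,\infty)$; $\lambda:=f_0(1)$, $P_f(I):=(f_0(I)-\lambda I)/(1-I)$ (smoothly extended to $I=1$), $h_f(z,I):=P_f(I)+zf_1(I)+z^2(I+(1-I)f_2(I))$, $A_i(I):=h_f(\beta_i,I)/(\beta_j-\beta_i)$ for $\{i,j\}=\{1,2\}$. $\beta$ with $\beta_1>\beta_2$ is $f$-compatible if $\beta_2\le\lambda\le\beta_1$ and $A_1,A_2\ge0$ on $[0,1]$; $\mathcal{B}_f$ is the set of $f$-compatible pairs, and $f$ is admissible iff $\mathcal{B}_f\ne\emptyset$. (In the associated SSISS model, $A_i(I)$ is the transfer rate out of compartment $S_i$ at $S_j=0$.) *)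

theory Defs
  imports "HOL-Analysis.Analysis"
begin

definition smooth_on :: "real set \<Rightarrow> (real \<Rightarrow> real) \<Rightarrow> bool" where
  "smooth_on S f \<longleftrightarrow> (\<exists>D::nat \<Rightarrow> real \<Rightarrow> real.
      (\<forall>x\<in>S. D 0 x = f x) \<and>
      (\<forall>n. \<forall>x\<in>S. (D n has_real_derivative D (Suc n) x) (at x within S)))"

definition lam :: "(real \<Rightarrow> real) \<Rightarrow> real" where
  "lam f0 = f0 1"

text \<open>P_f(I) = (f0(I) - \<lambda> I)/(1 - I), extended continuously (by its limit) at I = 1;
  the limit there is \<lambda> - f0'(1).\<close>
definition Pf :: "(real \<Rightarrow> real) \<Rightarrow> real \<Rightarrow> real" where
  "Pf f0 I = (if I = 1 then lam f0 - deriv f0 1 else (f0 I - lam f0 * I) / (1 - I))"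

definition hf :: "(real \<Rightarrow> real) \<Rightarrow> (real \<Rightarrow> real) \<Rightarrow> (real \<Rightarrow> real) \<Rightarrow> real \<Rightarrow> real \<Rightarrow> real" where
  "hf f0 f1 f2 z I = Pf f0 I + z * f1 I + z\<^sup>2 * (I + (1 - I) * f2 I)"

definition A1 :: "(real \<Rightarrow> real) \<Rightarrow> (real \<Rightarrow> real) \<Rightarrow> (real \<Rightarrow> real) \<Rightarrow> real \<times> real \<Rightarrow> real \<Rightarrow> real" where
  "A1 f0 f1 f2 \<beta> I = hf f0 f1 f2 (fst \<beta>) I / (snd \<beta> - fst \<beta>)"

definition A2 :: "(real \<Rightarrow> real) \<Rightarrow> (real \<Rightarrow> real) \<Rightarrow> (real \<Rightarrow> real) \<Rightarrow> real \<times> real \<Rightarrow> real \<Rightarrow> real" where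
  "A2 f0 f1 f2 \<beta> I = hf f0 f1 f2 (snd \<beta>) I / (fst \<beta> - snd \<beta>)"

definition compatible :: "(real \<Rightarrow> real) \<Rightarrow> (real \<Rightarrow> real) \<Rightarrow> (real \<Rightarrow> real) \<Rightarrow> real \<times> real \<Rightarrow> bool" where
  "compatible f0 f1 f2 \<beta> \<longleftrightarrow> fst \<beta> > snd \<beta> \<and> snd \<beta> \<le> lam f0 \<and> lam f0 \<le> fst \<beta> \<and>
     (\<forall>I\<in>{0..1}. A1 f0 f1 f2 \<beta> I \<ge> 0 \<and> A2 f0 f1 f2 \<beta> I \<ge> 0)"

definition Bf :: "(real \<Rightarrow> real) \<Rightarrow> (real \<Rightarrow> real) \<Rightarrow> (real \<Rightarrow> real) \<Rightarrow> (real \<times> real) set" where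
  "Bf f0 f1 f2 = {\<beta>. compatible f0 f1 f2 \<beta>}"

definition admissible :: "(real \<Rightarrow> real) \<Rightarrow> (real \<Rightarrow> real) \<Rightarrow> (real \<Rightarrow> real) \<Rightarrow> bool" where
  "admissible f0 f1 f2 \<longleftrightarrow> Bf f0 f1 f2 \<noteq> {}"

definition theta1 :: "(real \<Rightarrow> real) \<Rightarrow> (real \<Rightarrow> real) \<Rightarrow> (real \<Rightarrow> real) \<Rightarrow> real \<times> real \<Rightarrow> real" where
  "theta1 f0 f1 f2 \<beta> = A1 f0 f1 f2 \<beta> 1 - A1 f0 f1 f2 \<beta> 0"

definition theta2 :: "(real \<Rightarrow> real) \<Rightarrow> (real \<Rightarrow> real) \<Rightarrow> (real \<Rightarrow> real) \<Rightarrow> real \<times> real \<Rightarrow> real" where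
  "theta2 f0 f1 f2 \<beta> = A2 f0 f1 f2 \<beta> 1 - A2 f0 f1 f2 \<beta> 0"

definition Yroots :: "(real \<Rightarrow> real) \<Rightarrow> (real \<Rightarrow> real) \<Rightarrow> (real \<Rightarrow> real) \<Rightarrow> real \<Rightarrow> real \<Rightarrow> bool" where
  "Yroots f0 f1 f2 Yp Ym \<longleftrightarrow> Ym \<le> Yp \<and>
     (\<forall>z. hf f0 f1 f2 z 1 - hf f0 f1 f2 z 0 = (1 - f2 0) * (z - Yp) * (z - Ym))"

end

theory Submission
  imports Defs
begin

text \<open>With g(z) = h_f(z,1) - h_f(z,0) one has theta1 = g(beta1)/(beta2 - beta1) and
  theta2 = g(beta2)/(beta1 - beta2). Since g is a quadratic with leading coefficient
  1 - f2(0) \<noteq> 0, both thetas vanish exactly when beta1 > beta2 are the two roots of g,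
  i.e. beta = (Y+, Y-). Part (ii) follows because every f-compatible pair has beta1 > beta2.
  Only the values of f0, f1, f2 at 0 and 1 enter.\<close>

lemma quadratic_eq_by_distinct_roots:
  fixes a b c x y z :: real
  assumes "x \<noteq> y" and "a + b * x + c * x\<^sup>2 = 0" and "a + b * y + c * y\<^sup>2 = 0"
  shows "a + b * z + c * z\<^sup>2 = c * (z - x) * (z - y)"
proof -
  have "(x - y) * (b + c * (x + y)) = 0"
    using assms(2,3) by (simp add: algebra_simps power2_eq_square)
  with \<open>x \<noteq> y\<close> have b: "b = - c * (x + y)" by simp
  with assms(2) have a: "a = c * x * y" by (simp add: algebra_simps power2_eq_square)
  show ?thesis unfolding a b by (simp add: algebra_simps power2_eq_square)
qed

lemma hf_1_minus_hf_0:
  "hf f0 f1 f2 z 1 - hf f0 f1 f2 z 0 =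
     (Pf f0 1 - Pf f0 0) + (f1 1 - f1 0) * z + (1 - f2 0) * z\<^sup>2"
  unfolding hf_def by (simp add: algebra_simps)

lemma theta1_eq_0_iff:
  assumes "fst \<beta> \<noteq> snd \<beta>"
  shows "theta1 f0 f1 f2 \<beta> = 0 \<longleftrightarrow> hf f0 f1 f2 (fst \<beta>) 1 = hf f0 f1 f2 (fst \<beta>) 0"
  using assms unfolding theta1_def A1_def by (simp add: diff_divide_distrib[symmetric])

lemma theta2_eq_0_iff:
  assumes "fst \<beta> \<noteq> snd \<beta>"
  shows "theta2 f0 f1 f2 \<beta> = 0 \<longleftrightarrow> hf f0 f1 f2 (snd \<beta>) 1 = hf f0 f1 f2 (snd \<beta>) 0"
  using assms unfolding theta2_def A2_def by (simp add: diff_divide_distrib[symmetric])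

lemma thetas_eq_0_iff_Yroots:
  fixes f0 f1 f2 :: "real \<Rightarrow> real"
  assumes "f2 0 \<noteq> 1" and "\<beta>1 > \<beta>2"
  shows "theta1 f0 f1 f2 (\<beta>1, \<beta>2) = 0 \<and> theta2 f0 f1 f2 (\<beta>1, \<beta>2) = 0 \<longleftrightarrow>
         Yroots f0 f1 f2 \<beta>1 \<beta>2"
proof -
  define g where "g z = hf f0 f1 f2 z 1 - hf f0 f1 f2 z 0" for z
  have "theta1 f0 f1 f2 (\<beta>1, \<beta>2) = 0 \<and> theta2 f0 f1 f2 (\<beta>1, \<beta>2) = 0 \<longleftrightarrow>
        g \<beta>1 = 0 \<and> g \<beta>2 = 0"
    using \<open>\<beta>1 > \<beta>2\<close> by (simp add: theta1_eq_0_iff theta2_eq_0_iff g_def)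
  also have "\<dots> \<longleftrightarrow> (\<forall>z. g z = (1 - f2 0) * (z - \<beta>1) * (z - \<beta>2))"
  proof
    assume "g \<beta>1 = 0 \<and> g \<beta>2 = 0"
    then show "\<forall>z. g z = (1 - f2 0) * (z - \<beta>1) * (z - \<beta>2)"
      using \<open>\<beta>1 > \<beta>2\<close> unfolding g_def hf_1_minus_hf_0
      by (intro allI quadratic_eq_by_distinct_roots) auto
  qed simp
  also have "\<dots> \<longleftrightarrow> Yroots f0 f1 f2 \<beta>1 \<beta>2"
    using \<open>\<beta>1 > \<beta>2\<close> unfolding Yroots_def g_def by auto
  finally show ?thesis .
qed

lemma Bf_imp_fst_gt_snd: "\<beta> \<in> Bf f0 f1 f2 \<Longrightarrow> fst \<beta> > snd \<beta>"
  unfolding Bf_def compatible_def by simp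

theorem corollary5p4:
  fixes f0 f1 f2 :: "real \<Rightarrow> real"
  assumes "smooth_on {0..} f0" and "smooth_on {0..} f1" and "smooth_on {0..} f2"
    and "f2 0 \<noteq> 1"
  shows "(\<forall>\<beta>1 \<beta>2. \<beta>1 > \<beta>2 \<longrightarrow>
            ((theta1 f0 f1 f2 (\<beta>1, \<beta>2) = 0 \<and> theta2 f0 f1 f2 (\<beta>1, \<beta>2) = 0) \<longleftrightarrow>
             (\<exists>Yp Ym. Yroots f0 f1 f2 Yp Ym \<and> (\<beta>1, \<beta>2) = (Yp, Ym))))
       \<and> (admissible f0 f1 f2 \<longrightarrow>
            ((\<exists>\<beta>\<in>Bf f0 f1 f2. theta1 f0 f1 f2 \<beta> = 0 \<and> theta2 f0 f1 f2 \<beta> = 0) \<longleftrightarrow>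
             (\<exists>Yp Ym. Yroots f0 f1 f2 Yp Ym \<and> (Yp, Ym) \<in> Bf f0 f1 f2)))"
proof (intro conjI allI impI)
  show "(theta1 f0 f1 f2 (\<beta>1, \<beta>2) = 0 \<and> theta2 f0 f1 f2 (\<beta>1, \<beta>2) = 0) \<longleftrightarrow>
        (\<exists>Yp Ym. Yroots f0 f1 f2 Yp Ym \<and> (\<beta>1, \<beta>2) = (Yp, Ym))" if "\<beta>1 > \<beta>2" for \<beta>1 \<beta>2
    using thetas_eq_0_iff_Yroots[of f2 _ _ f0 f1, OF assms(4) that] by simp
  have "theta1 f0 f1 f2 \<beta> = 0 \<and> theta2 f0 f1 f2 \<beta> = 0 \<longleftrightarrow> Yroots f0 f1 f2 (fst \<beta>) (snd \<beta>)"
    if "\<beta> \<in> Bf f0 f1 f2" for \<beta>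
    using thetas_eq_0_iff_Yroots[of f2 _ _ f0 f1, OF assms(4) Bf_imp_fst_gt_snd[OF that]] by simp
  then show "(\<exists>\<beta>\<in>Bf f0 f1 f2. theta1 f0 f1 f2 \<beta> = 0 \<and> theta2 f0 f1 f2 \<beta> = 0) \<longleftrightarrow>
             (\<exists>Yp Ym. Yroots f0 f1 f2 Yp Ym \<and> (Yp, Ym) \<in> Bf f0 f1 f2)"
    by fastforce
qed

end
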